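(* If $G$ and $G'$ are two distinct acyclic subgraphs of $K_{n,d}$ with $LD(G)=LD(G')$ and $RD(G)=RD(G')$, then $G$ and $G'$ are not compatible.
   Context: Fix positive integers $n,d$. $K_{n,d}$ denotes the complete bipartite graph with left vertex set $[n]=\{1,\dots,n\}$ and right vertex set $[\bar d]=\{\bar 1,\dots,\bar d\}$; all graphs considered are subgraphs of $K_{n,d}$ (identified with their edge sets). For a subgraph $G$, $LD(G)\in\mathbb Z_{\ge0}^{[n]}$ is the vector of degrees of the left vertices and $RD(G)\in\mathbb Z_{\ge 0}^{[\bar d]}$ the vector of degrees of the right vertices. Two acyclic subgraphs $G,G'$ are called compatible if whenever both contain a perfect matching between the same pair of vertex sets $I\subseteq[n]$ and $\bar J\subseteq[\bar d]$, these two matchings are equal. *)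

theory Defs
  imports Main
begin

text \<open>Subgraphs of K_{n,d}: edge sets G of pairs (i,j) with left vertex i in {1..n}
  and right vertex j in {1..d} (j stands for the right vertex j-bar).\<close>

definition subgraph_K :: "nat \<Rightarrow> nat \<Rightarrow> (nat \<times> nat) set \<Rightarrow> bool" where
  "subgraph_K n d G \<longleftrightarrow> G \<subseteq> {1..n} \<times> {1..d}"

definition LD :: "(nat \<times> nat) set \<Rightarrow> nat \<Rightarrow> nat" where
  "LD G i = card {j. (i, j) \<in> G}"

definition RD :: "(nat \<times> nat) set \<Rightarrow> nat \<Rightarrow> nat" where
  "RD G j = card {i. (i, j) \<in> G}"

definition has_cycle :: "(nat \<times> nat) set \<Rightarrow> bool" where
  "has_cycle G \<longleftrightarrow> (\<exists>(k::nat) (f::nat \<Rightarrow> nat) (g::nat \<Rightarrow> nat). k \<ge> 2 \<and> inj_on f {..<k} \<and> inj_on g {..<k} \<and>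
      (\<forall>t<k. (f t, g t) \<in> G \<and> (f ((t + 1) mod k), g t) \<in> G))"

definition acyclic_bip :: "(nat \<times> nat) set \<Rightarrow> bool" where
  "acyclic_bip G \<longleftrightarrow> \<not> has_cycle G"

definition perfect_matching_in :: "(nat \<times> nat) set \<Rightarrow> nat set \<Rightarrow> nat set \<Rightarrow> (nat \<times> nat) set \<Rightarrow> bool" where
  "perfect_matching_in G I J M \<longleftrightarrow> M \<subseteq> G \<and> M \<subseteq> I \<times> J \<and>
     (\<forall>i\<in>I. \<exists>!j. (i, j) \<in> M) \<and> (\<forall>j\<in>J. \<exists>!i. (i, j) \<in> M)"

definition compatible :: "nat \<Rightarrow> nat \<Rightarrow> (nat \<times> nat) set \<Rightarrow> (nat \<times> nat) set \<Rightarrow> bool" where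
  "compatible n d G G' \<longleftrightarrow> (\<forall>I J M M'. I \<subseteq> {1..n} \<longrightarrow> J \<subseteq> {1..d} \<longrightarrow>
     perfect_matching_in G I J M \<longrightarrow> perfect_matching_in G' I J M' \<longrightarrow> M = M')"

end

theory Submission
  imports Defs
begin

text \<open>Equal degrees force every vertex to meet as many edges of
  G - G' as of G' - G, so from any edge of the symmetric difference one can walk alternately
  along edges of G - G' and G' - G. In the finite graph this walk closes up into a cycle, whose
  two alternate edge classes are distinct perfect matchings between the same vertex sets, one
  in G and one in G'.\<close>

lemma card_Diff_eq_card_Diff:
  assumes "finite A" "finite B" "card A = card B"
  shows "card (A - B) = card (B - A)"
  using assms by (metis Int_commute card_Diff_subset_Int finite_Int)

lemma Diff_nonempty_if_card_eq:
  assumes "finite A" "finite B" "card A = card B" "x \<in> A - B"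
  shows "\<exists>y. y \<in> B - A"
proof -
  have "card (A - B) > 0" using assms by (auto simp: card_gt_0_iff)
  then have "card (B - A) > 0" using card_Diff_eq_card_Diff[OF assms(1-3)] by simp
  then show ?thesis by (auto simp: card_gt_0_iff)
qed

lemma left_degree_balance:
  assumes "subgraph_K n d G" "subgraph_K n d G'" "LD G i = LD G' i" "(i, j) \<in> G' - G"
  shows "\<exists>j'. (i, j') \<in> G - G'"
proof -
  have fin: "finite {j. (i, j) \<in> H}" if "subgraph_K n d H" for H
    by (rule finite_subset[of _ "{1..d}"]) (use that in \<open>auto simp: subgraph_K_def\<close>)
  have "card {j. (i, j) \<in> G'} = card {j. (i, j) \<in> G}"
    using assms(3) by (simp add: LD_def)
  from Diff_nonempty_if_card_eq[OF fin[OF assms(2)] fin[OF assms(1)] this] assms(4)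
  show ?thesis by simp
qed

lemma right_degree_balance:
  assumes "subgraph_K n d G" "subgraph_K n d G'" "RD G j = RD G' j" "(i, j) \<in> G - G'"
  shows "\<exists>i'. (i', j) \<in> G' - G"
proof -
  have fin: "finite {i. (i, j) \<in> H}" if "subgraph_K n d H" for H
    by (rule finite_subset[of _ "{1..n}"]) (use that in \<open>auto simp: subgraph_K_def\<close>)
  have "card {i. (i, j) \<in> G} = card {i. (i, j) \<in> G'}"
    using assms(3) by (simp add: RD_def)
  from Diff_nonempty_if_card_eq[OF fin[OF assms(1)] fin[OF assms(2)] this] assms(4)
  show ?thesis by simp
qed

text \<open>The set of points from some time on of a periodic orbit.\<close>
lemma finite_self_map_has_cycle:
  assumes "finite D" "D \<noteq> {}" "h ` D \<subseteq> D"
  obtains I where "I \<subseteq> D" "I \<noteq> {}" "bij_betw h I I"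
proof -
  obtain i0 where i0: "i0 \<in> D" using assms(2) by blast
  define orb where "orb t = (h ^^ t) i0" for t
  have orb_Suc: "orb (Suc t) = h (orb t)" for t by (simp add: orb_def)
  have orb_in: "orb t \<in> D" for t
    by (induction t) (use i0 assms(3) in \<open>auto simp: orb_def\<close>)
  have "finite (range orb)" by (rule finite_subset[OF _ assms(1)]) (use orb_in in auto)
  then have "\<not> inj orb" using finite_imageD infinite_UNIV_nat by blast
  then obtain a b where "a \<noteq> b" "orb a = orb b" unfolding inj_def by blast
  then obtain a b where "a < b" "orb a = orb b" by (metis nat_neq_iff)
  define I where "I = orb ` {a..}"
  have "I \<subseteq> h ` I"
  proof
    fix i assume "i \<in> I"
    then obtain t where "t \<ge> a" "i = orb t" by (auto simp: I_def)
    then have "i = orb (Suc (if t = a then b - 1 else t - 1))"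
      using \<open>a < b\<close> \<open>orb a = orb b\<close> by simp
    moreover have "(if t = a then b - 1 else t - 1) \<in> {a..}" using \<open>t \<ge> a\<close> \<open>a < b\<close> by auto
    ultimately show "i \<in> h ` I" unfolding I_def orb_Suc by blast
  qed
  moreover have "h ` I \<subseteq> I"
  proof
    fix i assume "i \<in> h ` I"
    then obtain t where "t \<ge> a" "i = orb (Suc t)" by (auto simp: I_def orb_Suc)
    then show "i \<in> I" unfolding I_def by (intro image_eqI[of _ _ "Suc t"]) auto
  qed
  moreover have "I \<subseteq> D" using orb_in by (auto simp: I_def)
  ultimately have "bij_betw h I I"
    using finite_surj_inj[of I h] finite_subset[OF _ assms(1)] by (auto simp: bij_betw_def)
  moreover have "I \<noteq> {}" by (simp add: I_def)
  ultimately show ?thesis using that \<open>I \<subseteq> D\<close> by blast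
qed

lemma perfect_matching_in_mono:
  assumes "perfect_matching_in R I J M" "R \<subseteq> G"
  shows "perfect_matching_in G I J M"
  using assms by (auto simp: perfect_matching_in_def)

lemma perfect_matching_in_graph:
  assumes "bij_betw f I J" "\<And>i. i \<in> I \<Longrightarrow> (i, f i) \<in> G"
  shows "perfect_matching_in G I J ((\<lambda>i. (i, f i)) ` I)"
  using assms by (auto simp: perfect_matching_in_def bij_betw_def inj_on_def)

lemma perfect_matching_in_converse_graph:
  assumes "bij_betw g J I" "\<And>j. j \<in> J \<Longrightarrow> (g j, j) \<in> G"
  shows "perfect_matching_in G I J ((\<lambda>j. (g j, j)) ` J)"
  using assms by (auto simp: perfect_matching_in_def bij_betw_def inj_on_def)

text \<open>The matchings are carried by a cycle of the map sending a left vertex i along an edge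
  (i, j) of R and back along an edge of B ending in j.\<close>
lemma alternating_cycle_matchings:
  assumes "finite (Domain R)" "R \<noteq> {}"
    and B_to_R: "\<And>i j. (i, j) \<in> B \<Longrightarrow> \<exists>j'. (i, j') \<in> R"
    and R_to_B: "\<And>i j. (i, j) \<in> R \<Longrightarrow> \<exists>i'. (i', j) \<in> B"
  obtains I J M M' where "perfect_matching_in R I J M" "perfect_matching_in B I J M'"
    "M \<noteq> {}" "I \<subseteq> Domain R" "J \<subseteq> Range R"
proof -
  define next_R where "next_R i = (SOME j. (i, j) \<in> R)" for i
  define prev_B where "prev_B j = (SOME i. (i, j) \<in> B)" for j
  have R_next: "(i, next_R i) \<in> R" if "i \<in> Domain R" for i
    using that unfolding next_R_def by (auto intro: someI)
  have B_prev: "(prev_B j, j) \<in> B" if j: "j \<in> Range R" for j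
  proof -
    obtain i' where "(i', j) \<in> B" using R_to_B j by blast
    then show ?thesis unfolding prev_B_def by (rule someI)
  qed
  have maps_to: "(prev_B \<circ> next_R) ` Domain R \<subseteq> Domain R"
  proof
    fix i' assume "i' \<in> (prev_B \<circ> next_R) ` Domain R"
    then obtain i where "i \<in> Domain R" "i' = prev_B (next_R i)" by auto
    then have "(i', next_R i) \<in> B" using R_next B_prev by blast
    then show "i' \<in> Domain R" using B_to_R by blast
  qed
  have "Domain R \<noteq> {}" using assms(2) by (simp add: Domain_empty_iff)
  then obtain I where I: "I \<subseteq> Domain R" "I \<noteq> {}" "bij_betw (prev_B \<circ> next_R) I I"
    using finite_self_map_has_cycle[OF assms(1) _ maps_to] by blast
  define J where "J = next_R ` I"
  have J_Range: "J \<subseteq> Range R"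
    using I(1) R_next by (auto simp: J_def)
  have next_bij: "bij_betw next_R I J"
    using I(3) inj_on_imageI2 by (auto simp: J_def bij_betw_def)
  have prev_bij: "bij_betw prev_B J I"
    using I(3) inj_on_imageI[of prev_B next_R I] by (simp add: J_def bij_betw_def image_comp)
  show ?thesis
  proof (rule that)
    show "perfect_matching_in R I J ((\<lambda>i. (i, next_R i)) ` I)"
      by (rule perfect_matching_in_graph[OF next_bij]) (use R_next I(1) in blast)
    show "perfect_matching_in B I J ((\<lambda>j. (prev_B j, j)) ` J)"
      by (rule perfect_matching_in_converse_graph[OF prev_bij]) (use B_prev J_Range in blast)
  qed (use I(1,2) J_Range in auto)
qed

theorem mainTheorem2:
  fixes n d :: nat and G G' :: "(nat \<times> nat) set"
  assumes "n \<ge> 1" and "d \<ge> 1"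
    and "subgraph_K n d G" and "subgraph_K n d G'"
    and "acyclic_bip G" and "acyclic_bip G'"
    and "G \<noteq> G'"
    and "\<forall>i\<in>{1..n}. LD G i = LD G' i"
    and "\<forall>j\<in>{1..d}. RD G j = RD G' j"
  shows "\<not> compatible n d G G'"
proof
  assume compat: "compatible n d G G'"
  note sub = assms(3,4)
  have in_K: "G \<union> G' \<subseteq> {1..n} \<times> {1..d}" using sub by (auto simp: subgraph_K_def)
  have B_to_R: "\<exists>j'. (i, j') \<in> G - G'" if "(i, j) \<in> G' - G" for i j
    using left_degree_balance[OF sub _ that] assms(8) that in_K by blast
  have R_to_B: "\<exists>i'. (i', j) \<in> G' - G" if "(i, j) \<in> G - G'" for i j
    using right_degree_balance[OF sub _ that] assms(9) that in_K by blast
  have "G - G' \<noteq> {}"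
  proof
    assume no_R: "G - G' = {}"
    then obtain i j where "(i, j) \<in> G' - G" using assms(7) by auto
    then show False using B_to_R no_R by blast
  qed
  moreover have "finite (Domain (G - G'))"
    by (rule finite_subset[of _ "{1..n}"]) (use in_K in auto)
  ultimately obtain I J M M' where
    M: "perfect_matching_in (G - G') I J M" and M': "perfect_matching_in (G' - G) I J M'"
    and "M \<noteq> {}" "I \<subseteq> Domain (G - G')" "J \<subseteq> Range (G - G')"
    using alternating_cycle_matchings B_to_R R_to_B by metis
  then have "I \<subseteq> {1..n}" "J \<subseteq> {1..d}" using in_K by auto
  then have "M = M'"
    using compat perfect_matching_in_mono[OF M] perfect_matching_in_mono[OF M']
    by (auto simp: compatible_def)
  moreover have "M \<subseteq> G - G'" "M' \<subseteq> G' - G"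
    using M M' by (auto simp: perfect_matching_in_def)
  ultimately show False using \<open>M \<noteq> {}\<close> by blast
qed

end
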